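(* Let $\Delta$ be a pure $d$-dimensional simplicial complex that is acyclic in positive codimension (APC), and fix $0\le i<d$. Let $\Upsilon$ be an $i$-dimensional spanning tree of $\Delta$, let $\Theta=\Delta_i\setminus\Upsilon_i$ be the set of $i$-dimensional faces of $\Delta$ not in $\Upsilon$, and let $\tilde L$ be the reduced Laplacian, i.e. the square submatrix of $L_{\Delta,i}$ with rows and columns indexed by $\Theta$. Suppose that $\tilde H_{i-1}(\Upsilon;\mathbb{Z})=0$. Then $$K_i(\Delta)\cong \mathbb{Z}^{\Theta}/\operatorname{im}\tilde L.$$
   Context: For a finite simplicial complex $\Delta$, $\Delta_i$ denotes its set of $i$-dimensional faces, $\Delta_{(i)}$ its $i$-skeleton (all faces of dimension $\le i$), and $f_i(\Delta)=|\Delta_i|$. $C_i(\Delta;\mathbb{Z})$ is the free abelian group with basis $\Delta_i$ (each face given a fixed orientation; $C_{-1}=\mathbb{Z}$ is spanned by the empty face), $\partial_i=\partial_{\Delta,i}:C_i(\Delta;\mathbb{Z})\to C_{i-1}(\Delta;\mathbb{Z})$ is the simplicial boundary map, and $\partial^*_i:C_{i-1}(\Delta;\mathbb{Z})\to C_i(\Delta;\mathbb{Z})$ is the coboundary map, i.e. the transpose of $\partial_i$ with respect to the standard bases. The ($i$-dimensional, up-down) combinatorial Laplacian is $L_{\Delta,i}=\partial_{i+1}\partial^*_{i+1}:C_i(\Delta;\mathbb{Z})\to C_i(\Delta;\mathbb{Z})$. The $i$-dimensional critical group is $K_i(\Delta)=\ker\partial_i/\operatorname{im}(\partial_{i+1}\partial^*_{i+1})$.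 $\tilde H_i$ denotes reduced simplicial homology and $\beta_i(\Delta)=\dim_{\mathbb{Q}}\tilde H_i(\Delta;\mathbb{Q})$. A complex is pure if all maximal faces have the same dimension; a pure $d$-dimensional complex is APC if $\tilde H_j(\Delta;\mathbb{Q})=0$ for all $j<d$. If $\Gamma$ is a pure $k$-dimensional complex, a subcomplex $\Upsilon\subseteq\Gamma$ with $\Upsilon_{(k-1)}=\Gamma_{(k-1)}$ is a (simplicial) spanning tree of $\Gamma$ if (1) $\tilde H_k(\Upsilon;\mathbb{Z})=0$, (2) $\tilde H_{k-1}(\Upsilon;\mathbb{Q})=0$, and (3) $f_k(\Upsilon)=f_k(\Gamma)-\beta_k(\Gamma)+\beta_{k-1}(\Gamma)$. An $i$-dimensional spanning tree of $\Delta$ is a spanning tree of the skeleton $\Delta_{(i)}$. Chains supported on $\Upsilon$ or on $\Theta$ are regarded as elements of $C_i(\Delta;\mathbb{Z})$; $C_i(\Theta;\mathbb{Z})$ denotes the span of the faces in $\Theta$, identified with $\mathbb{Z}^\Theta$. *)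

theory Defs
  imports Complex_Main "HOL-Algebra.Group" "HOL-Algebra.Coset" "HOL-Library.Function_Algebras"
begin

(* A finite abstract simplicial complex on a linearly ordered vertex set; faces are
   finite vertex sets, the empty face is the unique (-1)-dimensional face.
   Each face is oriented by the increasing order of its vertices. *)
definition simplicial_complex :: "'a set set \<Rightarrow> bool" where
  "simplicial_complex \<Delta> \<longleftrightarrow> finite \<Delta> \<and> (\<forall>F\<in>\<Delta>. finite F) \<and> (\<forall>F\<in>\<Delta>. \<forall>G. G \<subseteq> F \<longrightarrow> G \<in> \<Delta>)"

definition faces :: "'a set set \<Rightarrow> int \<Rightarrow> 'a set set" where
  "faces \<Delta> j = {F\<in>\<Delta>. int (card F) = j + 1}"

definition skeleton :: "'a set set \<Rightarrow> int \<Rightarrow> 'a set set" where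
  "skeleton \<Delta> j = {F\<in>\<Delta>. int (card F) \<le> j + 1}"

definition pure_dim :: "'a set set \<Rightarrow> int \<Rightarrow> bool" where
  "pure_dim \<Delta> d \<longleftrightarrow> simplicial_complex \<Delta> \<and> faces \<Delta> d \<noteq> {} \<and>
     (\<forall>F\<in>\<Delta>. int (card F) \<le> d + 1) \<and> (\<forall>F\<in>\<Delta>. \<exists>G\<in>faces \<Delta> d. F \<subseteq> G)"

(* incidence sign [F : F - {v}] for the increasing-order orientation *)
definition osign :: "'a::linorder set \<Rightarrow> 'a \<Rightarrow> 'r::comm_ring_1" where
  "osign F v = (-1) ^ card {u\<in>F. u < v}"

definition chains :: "'a set set \<Rightarrow> int \<Rightarrow> ('a set \<Rightarrow> 'r::zero) set" where
  "chains \<Delta> j = {c. \<forall>F. F \<notin> faces \<Delta> j \<longrightarrow> c F = 0}"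

definition bd :: "'a::linorder set set \<Rightarrow> int \<Rightarrow> ('a set \<Rightarrow> 'r::comm_ring_1) \<Rightarrow> ('a set \<Rightarrow> 'r)" where
  "bd \<Delta> j c = (\<lambda>G. if G \<in> faces \<Delta> (j - 1)
      then (\<Sum>v\<in>{v. v \<notin> G \<and> insert v G \<in> faces \<Delta> j}. osign (insert v G) v * c (insert v G))
      else 0)"

definition cobd :: "'a::linorder set set \<Rightarrow> int \<Rightarrow> ('a set \<Rightarrow> 'r::comm_ring_1) \<Rightarrow> ('a set \<Rightarrow> 'r)" where
  "cobd \<Delta> j c = (\<lambda>F. if F \<in> faces \<Delta> j then (\<Sum>v\<in>F. osign F v * c (F - {v})) else 0)"

definition laplacian :: "'a::linorder set set \<Rightarrow> int \<Rightarrow> ('a set \<Rightarrow> 'r::comm_ring_1) \<Rightarrow> ('a set \<Rightarrow> 'r)" where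
  "laplacian \<Delta> i c = bd \<Delta> (i + 1) (cobd \<Delta> (i + 1) c)"

definition cycles :: "'a::linorder set set \<Rightarrow> int \<Rightarrow> ('a set \<Rightarrow> 'r::comm_ring_1) set" where
  "cycles \<Delta> j = {c \<in> chains \<Delta> j. bd \<Delta> j c = 0}"

definition boundaries :: "'a::linorder set set \<Rightarrow> int \<Rightarrow> ('a set \<Rightarrow> 'r::comm_ring_1) set" where
  "boundaries \<Delta> j = bd \<Delta> (j + 1) ` chains \<Delta> (j + 1)"

(* \<tilde>H_j(\<Delta>;R) = 0, with R given by the type 'r *)
definition homology_vanishes :: "'r::comm_ring_1 itself \<Rightarrow> 'a::linorder set set \<Rightarrow> int \<Rightarrow> bool" where
  "homology_vanishes R \<Delta> j \<longleftrightarrow> (cycles \<Delta> j :: ('a set \<Rightarrow> 'r) set) \<subseteq> boundaries \<Delta> j"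

definition scaleQ :: "rat \<Rightarrow> ('a set \<Rightarrow> rat) \<Rightarrow> ('a set \<Rightarrow> rat)" where
  "scaleQ a f = (\<lambda>x. a * f x)"

definition betti :: "'a::linorder set set \<Rightarrow> int \<Rightarrow> int" where
  "betti \<Delta> j = int (vector_space.dim scaleQ (cycles \<Delta> j :: ('a set \<Rightarrow> rat) set))
              - int (vector_space.dim scaleQ (boundaries \<Delta> j :: ('a set \<Rightarrow> rat) set))"

definition APC :: "'a::linorder set set \<Rightarrow> int \<Rightarrow> bool" where
  "APC \<Delta> d \<longleftrightarrow> pure_dim \<Delta> d \<and> (\<forall>j<d. homology_vanishes TYPE(rat) \<Delta> j)"

definition spanning_tree :: "'a::linorder set set \<Rightarrow> int \<Rightarrow> 'a set set \<Rightarrow> bool" where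
  "spanning_tree \<Gamma> k \<Upsilon> \<longleftrightarrow> pure_dim \<Gamma> k \<and> simplicial_complex \<Upsilon> \<and> \<Upsilon> \<subseteq> \<Gamma> \<and>
     skeleton \<Upsilon> (k - 1) = skeleton \<Gamma> (k - 1) \<and>
     homology_vanishes TYPE(int) \<Upsilon> k \<and>
     homology_vanishes TYPE(rat) \<Upsilon> (k - 1) \<and>
     int (card (faces \<Upsilon> k)) = int (card (faces \<Gamma> k)) - betti \<Gamma> k + betti \<Gamma> (k - 1)"

definition chain_group :: "'a set set \<Rightarrow> ('a set \<Rightarrow> int) monoid" where
  "chain_group S = \<lparr>carrier = {c. \<forall>F. F \<notin> S \<longrightarrow> c F = 0},
                    mult = (\<lambda>c e. (\<lambda>F. c F + e F)), one = (\<lambda>F. 0)\<rparr>"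

definition critical_group :: "'a::linorder set set \<Rightarrow> int \<Rightarrow> ('a set \<Rightarrow> int) set monoid" where
  "critical_group \<Delta> i =
     ((chain_group (faces \<Delta> i))\<lparr>carrier := cycles \<Delta> i\<rparr>) Mod (laplacian \<Delta> i ` chains \<Delta> i)"

definition reduced_laplacian :: "'a::linorder set set \<Rightarrow> int \<Rightarrow> 'a set set \<Rightarrow> ('a set \<Rightarrow> int) \<Rightarrow> ('a set \<Rightarrow> int)" where
  "reduced_laplacian \<Delta> i \<Theta> c = (\<lambda>F. if F \<in> \<Theta> then laplacian \<Delta> i c F else 0)"

end

theory Submission
  imports Defs
begin

text \<open>
  Let \<open>\<Theta>\<close> be the \<open>i\<close>-faces of \<open>\<Delta>\<close> outside the spanning tree \<open>\<Upsilon>\<close>.  The proof shows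
  that restriction to \<open>\<Theta>\<close> is an isomorphism from the cycle group \<open>ker \<partial>\<^sub>i\<close> onto
  \<open>\<int>\<^sup>\<Theta>\<close> which carries \<open>im L\<^sub>\<Delta>\<^sub>,\<^sub>i\<close> onto \<open>im L\<^sup>~\<close>:
  \<^item> injectivity: a cycle vanishing on \<open>\<Theta>\<close> is an \<open>i\<close>-cycle of \<open>\<Upsilon>\<close>; as \<open>\<Upsilon>\<close> has no
    \<open>(i+1)\<close>-faces and \<open>\<tilde>H\<^sub>i(\<Upsilon>;\<int>) = 0\<close>, it is zero;
  \<^item> surjectivity: \<open>\<tilde>H\<^sub>i\<^sub>-\<^sub>1(\<Upsilon>;\<int>) = 0\<close> provides for every \<open>t \<in> \<Theta>\<close> a fundamental cycle,
    equal to the indicator of \<open>t\<close> on \<open>\<Theta>\<close>, and every cycle is the combination of these;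
  \<^item> Laplacians: the coboundary of \<open>x\<close> only sees the pairings of \<open>x\<close> with the cycles \<open>\<partial>F\<close>,
    and these do not change when \<open>x\<close> is replaced by a suitable chain supported on \<open>\<Theta>\<close>.  Of the hypotheses only
  that \<open>\<Delta>\<close> is a simplicial complex, \<open>\<Upsilon> \<subseteq> \<Delta>\<^sub>(\<^sub>i\<^sub>)\<close> with the same \<open>(i-1)\<close>-skeleton, and the
  two integral homology conditions on \<open>\<Upsilon>\<close> are needed.
\<close>

section \<open>Simplicial chain algebra\<close>

text \<open>Only finitely many vertices extend a face; this makes all boundary sums finite.\<close>

lemma finite_extensions:
  assumes "simplicial_complex \<Delta>"
  shows "finite {v. v \<notin> G \<and> insert v G \<in> faces \<Delta> j}"
proof -
  have "finite (\<Union>\<Delta>)" using assms unfolding simplicial_complex_def by auto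
  moreover have "{v. v \<notin> G \<and> insert v G \<in> faces \<Delta> j} \<subseteq> \<Union>\<Delta>"
    unfolding faces_def by auto
  ultimately show ?thesis by (rule finite_subset[rotated])
qed

lemma finite_faces: "simplicial_complex \<Delta> \<Longrightarrow> finite (faces \<Delta> j)"
  unfolding simplicial_complex_def faces_def by auto

lemma bd_chain: "bd \<Delta> j c \<in> chains \<Delta> (j - 1)"
  unfolding bd_def chains_def by auto

lemma bd_add: "bd \<Delta> j (\<lambda>F. a F + b F) = (\<lambda>G. bd \<Delta> j a G + bd \<Delta> j b G)"
  unfolding bd_def by (simp add: sum.distrib algebra_simps fun_eq_iff)

lemma bd_neg: "bd \<Delta> j (\<lambda>F. - a F) = (\<lambda>G. - bd \<Delta> j a G)"
  unfolding bd_def by (simp add: sum_negf fun_eq_iff)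

lemma bd_diff: "bd \<Delta> j (\<lambda>F. a F - b F) = (\<lambda>G. bd \<Delta> j a G - bd \<Delta> j b G)"
  unfolding bd_def by (simp add: sum_subtractf algebra_simps fun_eq_iff)

lemma bd_sum:
  "bd \<Delta> j (\<lambda>F. \<Sum>t\<in>T. k t * f t F) = (\<lambda>G. \<Sum>t\<in>T. k t * bd \<Delta> j (f t) G)"
  unfolding bd_def by (auto simp: sum_distrib_left algebra_simps fun_eq_iff intro: sum.swap)

lemma cobd_add: "cobd \<Delta> j (\<lambda>F. a F + b F) = (\<lambda>G. cobd \<Delta> j a G + cobd \<Delta> j b G)"
  unfolding cobd_def by (simp add: sum.distrib algebra_simps fun_eq_iff)

lemma cobd_neg: "cobd \<Delta> j (\<lambda>F. - a F) = (\<lambda>G. - cobd \<Delta> j a G)"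
  unfolding cobd_def by (simp add: sum_negf fun_eq_iff)

lemma laplacian_add:
  "laplacian \<Delta> j (\<lambda>F. a F + b F) = (\<lambda>G. laplacian \<Delta> j a G + laplacian \<Delta> j b G)"
  unfolding laplacian_def cobd_add bd_add ..

lemma laplacian_neg: "laplacian \<Delta> j (\<lambda>F. - a F) = (\<lambda>G. - laplacian \<Delta> j a G)"
  unfolding laplacian_def cobd_neg bd_neg ..

text \<open>Removing two vertices in either order produces opposite incidence signs; this is the
  sign cancellation behind \<open>\<partial>\<partial> = 0\<close>.\<close>
lemma osign_swap:
  fixes v w :: "'a::linorder"
  assumes "finite H" "v \<notin> H" "w \<notin> H" "v \<noteq> w"
  shows "(osign (insert v H) v * osign (insert w (insert v H)) w :: 'r::comm_ring_1)
       = - (osign (insert w H) w * osign (insert v (insert w H)) v)"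
proof -
  have swap_lt: "(osign (insert x H) x * osign (insert y (insert x H)) y :: 'r)
       = - (osign (insert y H) y * osign (insert x (insert y H)) x)"
    if "x \<notin> H" "y \<notin> H" "x < y" for x y
  proof -
    have below: "{u\<in>insert x H. u < x} = {u\<in>H. u < x}"
        "{u\<in>insert y (insert x H). u < y} = insert x {u\<in>H. u < y}"
        "{u\<in>insert y H. u < y} = {u\<in>H. u < y}"
        "{u\<in>insert x (insert y H). u < x} = {u\<in>H. u < x}"
      using that by auto
    have "card (insert x {u\<in>H. u < y}) = Suc (card {u\<in>H. u < y})"
      using assms(1) that by simp
    then show ?thesis unfolding osign_def below by simp
  qed
  show ?thesis
  proof (cases "v < w")
    case True then show ?thesis using swap_lt assms by blast
  next
    case False then have "w < v" using assms by auto
    from swap_lt[OF assms(3,2) this] show ?thesis by (simp add: minus_equation_iff)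
  qed
qed

lemma sum_antisymmetric_zero:
  fixes g :: "'b::linorder \<times> 'b \<Rightarrow> 'r::ab_group_add"
  assumes "finite P"
    and sym: "\<And>v w. (v,w) \<in> P \<Longrightarrow> (w,v) \<in> P \<and> v \<noteq> w"
    and anti: "\<And>v w. (v,w) \<in> P \<Longrightarrow> g (w,v) = - g (v,w)"
  shows "sum g P = 0"
proof -
  define L where "L = {p \<in> P. fst p < snd p}"
  have "P = L \<union> prod.swap ` L"
    using sym by (auto simp: L_def image_iff) (metis linorder_neqE)
  moreover have "L \<inter> prod.swap ` L = {}" by (auto simp: L_def)
  moreover have "finite L" using \<open>finite P\<close> by (simp add: L_def)
  ultimately have "sum g P = sum g L + sum g (prod.swap ` L)"
    by (metis finite_imageI sum.union_disjoint)
  also have "sum g (prod.swap ` L) = sum (g \<circ> prod.swap) L"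
    by (simp add: sum.reindex)
  also have "\<dots> = - sum g L"
    using anti by (auto simp: L_def sum_negf[symmetric] intro!: sum.cong)
  finally show ?thesis by simp
qed

text \<open>The two-step extensions of a face \<open>H\<close> to a \<open>j\<close>-face are exactly the ordered pairs of
  distinct new vertices, because faces are closed under taking subsets.\<close>
lemma two_step_extensions:
  assumes sc: "simplicial_complex \<Delta>" and H: "H \<in> faces \<Delta> (j - 1 - 1)"
  shows "Sigma {v. v \<notin> H \<and> insert v H \<in> faces \<Delta> (j - 1)}
             (\<lambda>v. {w. w \<notin> insert v H \<and> insert w (insert v H) \<in> faces \<Delta> j})
       = {(v,w). v \<notin> H \<and> w \<notin> H \<and> v \<noteq> w \<and> insert w (insert v H) \<in> faces \<Delta> j}"
    (is "?S = ?P")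
proof
  show "?S \<subseteq> ?P" by auto
  show "?P \<subseteq> ?S"
  proof
    fix p assume "p \<in> ?P"
    then obtain v w where p: "p = (v,w)" "v \<notin> H" "w \<notin> H" "v \<noteq> w"
      "insert w (insert v H) \<in> faces \<Delta> j" by auto
    have "insert w (insert v H) \<in> \<Delta>" using p unfolding faces_def by auto
    then have "insert v H \<in> \<Delta>" using sc unfolding simplicial_complex_def by blast
    moreover have "finite H" "int (card H) = j - 1"
      using H sc unfolding faces_def simplicial_complex_def by auto
    then have "int (card (insert v H)) = j - 1 + 1" using p by simp
    ultimately have "insert v H \<in> faces \<Delta> (j - 1)" unfolding faces_def by auto
    then show "p \<in> ?S" using p by auto
  qed
qed

text \<open>\<open>\<partial>\<^sub>j\<^sub>-\<^sub>1 \<circ> \<partial>\<^sub>j = 0\<close>, over any commutative ring: the double boundary at \<open>H\<close> is a sum over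
  ordered pairs of new vertices whose terms cancel by \<open>osign_swap\<close>.\<close>
lemma bd_bd_zero:
  assumes sc: "simplicial_complex \<Delta>"
  shows "bd \<Delta> (j - 1) (bd \<Delta> j c) = (\<lambda>_. 0 :: 'r::comm_ring_1)"
proof
  fix H
  show "bd \<Delta> (j - 1) (bd \<Delta> j c) H = 0"
  proof (cases "H \<in> faces \<Delta> (j - 1 - 1)")
    case False then show ?thesis by (simp add: bd_def)
  next
    case True
    have finH: "finite H" using True sc unfolding faces_def simplicial_complex_def by auto
    define A where "A = {v. v \<notin> H \<and> insert v H \<in> faces \<Delta> (j - 1)}"
    define B where "B = (\<lambda>v. {w. w \<notin> insert v H \<and> insert w (insert v H) \<in> faces \<Delta> j})"
    define P where "P = {(v,w). v \<notin> H \<and> w \<notin> H \<and> v \<noteq> w \<and> insert w (insert v H) \<in> faces \<Delta> j}"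
    define g where "g = (\<lambda>(v,w). osign (insert v H) v * (osign (insert w (insert v H)) w
                       * c (insert w (insert v H))) :: 'r)"
    have finA: "finite A" unfolding A_def by (rule finite_extensions[OF sc])
    have finB: "\<And>v. finite (B v)" unfolding B_def by (rule finite_extensions[OF sc])
    have SigmaP: "Sigma A B = P" unfolding A_def B_def P_def by (rule two_step_extensions[OF sc True])
    have "bd \<Delta> (j - 1) (bd \<Delta> j c) H = (\<Sum>v\<in>A. osign (insert v H) v * bd \<Delta> j c (insert v H))"
      using True by (simp add: bd_def A_def)
    also have "\<dots> = (\<Sum>v\<in>A. \<Sum>w\<in>B v. g (v,w))"
      by (rule sum.cong) (auto simp: A_def B_def g_def bd_def sum_distrib_left)
    also have "\<dots> = sum g P"
      using sum.Sigma[OF finA, of B "\<lambda>v w. g (v,w)"] finB SigmaP by (simp add: case_prod_beta)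
    also have "\<dots> = 0"
    proof (rule sum_antisymmetric_zero)
      show "finite P" using SigmaP finA finB by blast
    next
      fix v w assume "(v,w) \<in> P"
      then show "(w,v) \<in> P \<and> v \<noteq> w" unfolding P_def by (auto simp: insert_commute)
    next
      fix v w assume "(v,w) \<in> P"
      then have "v \<notin> H" "w \<notin> H" "v \<noteq> w" unfolding P_def by auto
      from osign_swap[OF finH this, where 'r='r] show "g (w,v) = - g (v,w)"
        unfolding g_def by (simp add: insert_commute mult.assoc[symmetric])
    qed
    finally show ?thesis .
  qed
qed

lemma boundary_cycle:
  assumes "simplicial_complex \<Delta>"
  shows "bd \<Delta> (j + 1) c \<in> cycles \<Delta> j"
proof -
  have "bd \<Delta> j (bd \<Delta> (j + 1) c) = 0"
    using bd_bd_zero[OF assms, of "j + 1" c] by (simp add: zero_fun_def)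
  then show ?thesis using bd_chain[of \<Delta> "j + 1" c] unfolding cycles_def by simp
qed

lemma laplacian_cycle: "simplicial_complex \<Delta> \<Longrightarrow> laplacian \<Delta> j x \<in> cycles \<Delta> j"
  unfolding laplacian_def by (rule boundary_cycle)

lemma cycles_diff:
  assumes "a \<in> cycles \<Delta> j" "b \<in> cycles \<Delta> j"
  shows "(\<lambda>F. a F - b F) \<in> cycles \<Delta> j"
  using assms unfolding cycles_def chains_def by (simp add: bd_diff zero_fun_def)

definition unit_chain :: "'a set \<Rightarrow> 'a set \<Rightarrow> 'r::zero_neq_one" where
  "unit_chain F = (\<lambda>H. if H = F then 1 else 0)"

lemma cobd_as_transpose:
  assumes sc: "simplicial_complex \<Delta>" and F: "F \<in> faces \<Delta> j"
  shows "cobd \<Delta> j x F = (\<Sum>G\<in>faces \<Delta> (j - 1). bd \<Delta> j (unit_chain F) G * x G)"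
proof -
  have finF: "finite F" and FD: "F \<in> \<Delta>" and cF: "int (card F) = j + 1"
    using F sc unfolding faces_def simplicial_complex_def by auto
  have facet: "F - {v} \<in> faces \<Delta> (j - 1)" if v: "v \<in> F" for v
  proof -
    have "F - {v} \<in> \<Delta>" using FD sc unfolding simplicial_complex_def by blast
    moreover have "card F = Suc (card (F - {v}))"
      using card_Suc_Diff1[OF finF v] by simp
    ultimately show ?thesis using cF unfolding faces_def by auto
  qed
  have fin: "finite (faces \<Delta> (j - 1))" by (rule finite_faces[OF sc])
  have incidence: "(\<Sum>v\<in>F. if G = F - {v} then osign F v * x G else 0)
        = bd \<Delta> j (unit_chain F) G * x G" if G: "G \<in> faces \<Delta> (j - 1)" for G
  proof -
    let ?E = "{v. v \<notin> G \<and> insert v G \<in> faces \<Delta> j}"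
    have "(\<Sum>v\<in>F. if G = F - {v} then osign F v * x G else 0)
        = (\<Sum>v\<in>{v\<in>F. G = F - {v}}. osign F v * x G)"
      by (rule sum.inter_filter[symmetric]) (rule finF)
    also have "{v\<in>F. G = F - {v}} = {v \<in> ?E. insert v G = F}"
      using F by (auto simp: insert_absorb)
    also have "(\<Sum>v\<in>{v \<in> ?E. insert v G = F}. osign F v * x G)
        = (\<Sum>v\<in>?E. if insert v G = F then osign (insert v G) v * x G else 0)"
      by (subst sum.inter_filter[OF finite_extensions[OF sc], symmetric]) (rule sum.cong, auto)
    also have "\<dots> = bd \<Delta> j (unit_chain F) G * x G"
      using G unfolding bd_def unit_chain_def by (simp add: sum_distrib_right) (intro sum.cong, auto)
    finally show ?thesis .
  qed
  have "cobd \<Delta> j x F = (\<Sum>v\<in>F. osign F v * x (F - {v}))" using F by (simp add: cobd_def)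
  also have "\<dots> = (\<Sum>v\<in>F. \<Sum>G\<in>faces \<Delta> (j - 1). if G = F - {v} then osign F v * x G else 0)"
    by (rule sum.cong[OF refl]) (simp add: sum.delta[OF fin] facet)
  also have "\<dots> = (\<Sum>G\<in>faces \<Delta> (j - 1). \<Sum>v\<in>F. if G = F - {v} then osign F v * x G else 0)"
    by (rule sum.swap)
  also have "\<dots> = (\<Sum>G\<in>faces \<Delta> (j - 1). bd \<Delta> j (unit_chain F) G * x G)"
    by (rule sum.cong[OF refl]) (rule incidence)
  finally show ?thesis .
qed

lemma faces_skeleton: "j \<le> k \<Longrightarrow> faces (skeleton \<Delta> k) j = faces \<Delta> j"
  unfolding faces_def skeleton_def by auto

lemma skeleton_skeleton: "j \<le> k \<Longrightarrow> skeleton (skeleton \<Delta> k) j = skeleton \<Delta> j"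
  unfolding skeleton_def by auto

section \<open>Chain groups and quotients\<close>

lemma chain_group_carrier: "carrier (chain_group S) = {c. \<forall>F. F \<notin> S \<longrightarrow> c F = 0}"
  by (simp add: chain_group_def)

lemma chain_group_mult: "x \<otimes>\<^bsub>chain_group S\<^esub> y = (\<lambda>F. x F + y F)"
  by (simp add: chain_group_def)

lemma chain_group_one: "\<one>\<^bsub>chain_group S\<^esub> = (\<lambda>F. 0)"
  by (simp add: chain_group_def)

lemma chain_group_comm_group: "comm_group (chain_group S)"
proof (rule comm_groupI)
  fix x assume "x \<in> carrier (chain_group S)"
  then show "\<exists>y\<in>carrier (chain_group S). y \<otimes>\<^bsub>chain_group S\<^esub> x = \<one>\<^bsub>chain_group S\<^esub>"
    by (intro bexI[of _ "\<lambda>F. - x F"]) (auto simp: chain_group_carrier chain_group_mult chain_group_one)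
qed (auto simp: chain_group_carrier chain_group_mult chain_group_one)

lemma chain_group_inv:
  assumes "x \<in> carrier (chain_group S)"
  shows "inv\<^bsub>chain_group S\<^esub> x = (\<lambda>F. - x F)"
proof -
  interpret comm_group "chain_group S" by (rule chain_group_comm_group)
  show ?thesis
    using assms by (intro inv_equality) (auto simp: chain_group_carrier chain_group_mult chain_group_one)
qed

lemma cycles_subgroup: "subgroup (cycles \<Delta> j) (chain_group (faces \<Delta> j))"
proof -
  interpret comm_group "chain_group (faces \<Delta> j)" by (rule chain_group_comm_group)
  show ?thesis
  proof (rule subgroupI)
    show "cycles \<Delta> j \<subseteq> carrier (chain_group (faces \<Delta> j))"
      by (auto simp: cycles_def chains_def chain_group_carrier)
    have "(\<lambda>F. 0) \<in> cycles \<Delta> j"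
      by (simp add: cycles_def chains_def bd_def zero_fun_def fun_eq_iff)
    then show "cycles \<Delta> j \<noteq> {}" by auto
  next
    fix a :: "'a set \<Rightarrow> int" assume "a \<in> cycles \<Delta> j"
    then show "inv\<^bsub>chain_group (faces \<Delta> j)\<^esub> a \<in> cycles \<Delta> j"
      by (auto simp: chain_group_inv chain_group_carrier cycles_def chains_def bd_neg zero_fun_def)
  next
    fix a b :: "'a set \<Rightarrow> int" assume "a \<in> cycles \<Delta> j" "b \<in> cycles \<Delta> j"
    then show "a \<otimes>\<^bsub>chain_group (faces \<Delta> j)\<^esub> b \<in> cycles \<Delta> j"
      by (simp add: chain_group_mult cycles_def chains_def bd_add zero_fun_def fun_eq_iff)
  qed
qed

lemma reduced_laplacian_subgroup:
  "subgroup (reduced_laplacian \<Delta> i S ` carrier (chain_group S)) (chain_group S)"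
proof -
  interpret comm_group "chain_group S" by (rule chain_group_comm_group)
  show ?thesis
  proof (rule subgroupI)
    show "reduced_laplacian \<Delta> i S ` carrier (chain_group S) \<subseteq> carrier (chain_group S)"
      by (auto simp: chain_group_carrier reduced_laplacian_def)
    show "reduced_laplacian \<Delta> i S ` carrier (chain_group S) \<noteq> {}"
      by (auto simp: chain_group_carrier)
  next
    fix a assume "a \<in> reduced_laplacian \<Delta> i S ` carrier (chain_group S)"
    then obtain y where y: "y \<in> carrier (chain_group S)" "a = reduced_laplacian \<Delta> i S y" by auto
    then have "inv\<^bsub>chain_group S\<^esub> a = reduced_laplacian \<Delta> i S (\<lambda>F. - y F)"
      by (subst chain_group_inv) (auto simp: chain_group_carrier reduced_laplacian_def laplacian_neg)
    moreover have "(\<lambda>F. - y F) \<in> carrier (chain_group S)" using y by (auto simp: chain_group_carrier)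
    ultimately show "inv\<^bsub>chain_group S\<^esub> a \<in> reduced_laplacian \<Delta> i S ` carrier (chain_group S)"
      by auto
  next
    fix a b assume "a \<in> reduced_laplacian \<Delta> i S ` carrier (chain_group S)"
      "b \<in> reduced_laplacian \<Delta> i S ` carrier (chain_group S)"
    then obtain y y' where y: "y \<in> carrier (chain_group S)" "a = reduced_laplacian \<Delta> i S y"
      and y': "y' \<in> carrier (chain_group S)" "b = reduced_laplacian \<Delta> i S y'" by auto
    then have "a \<otimes>\<^bsub>chain_group S\<^esub> b = reduced_laplacian \<Delta> i S (\<lambda>F. y F + y' F)"
      by (auto simp: chain_group_mult reduced_laplacian_def laplacian_add)
    moreover have "(\<lambda>F. y F + y' F) \<in> carrier (chain_group S)"
      using y y' by (auto simp: chain_group_carrier)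
    ultimately show "a \<otimes>\<^bsub>chain_group S\<^esub> b \<in> reduced_laplacian \<Delta> i S ` carrier (chain_group S)"
      by auto
  qed
qed

definition restrict_chain :: "'a set set \<Rightarrow> ('a set \<Rightarrow> int) \<Rightarrow> ('a set \<Rightarrow> int)" where
  "restrict_chain S z = (\<lambda>F. if F \<in> S then z F else 0)"

lemma restrict_chain_hom:
  "group_hom ((chain_group (faces \<Delta> j))\<lparr>carrier := cycles \<Delta> j\<rparr>) (chain_group S) (restrict_chain S)"
  unfolding group_hom_def group_hom_axioms_def
proof (intro conjI)
  show "group ((chain_group (faces \<Delta> j))\<lparr>carrier := cycles \<Delta> j\<rparr>)"
    using cycles_subgroup chain_group_comm_group comm_group.axioms(2) subgroup.subgroup_is_group
    by blast
  show "group (chain_group S)" using chain_group_comm_group comm_group.axioms(2) by blast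
  show "restrict_chain S \<in> hom ((chain_group (faces \<Delta> j))\<lparr>carrier := cycles \<Delta> j\<rparr>) (chain_group S)"
    by (rule homI) (auto simp: restrict_chain_def chain_group_carrier chain_group_mult)
qed

lemma reduced_laplacian_restrict:
  "reduced_laplacian \<Delta> i S y = restrict_chain S (laplacian \<Delta> i y)"
  by (simp add: reduced_laplacian_def restrict_chain_def)

text \<open>If \<open>h : G \<rightarrow> H\<close> is onto and \<open>N \<lhd> H\<close>, then \<open>G/h\<^sup>-\<^sup>1(N) \<cong> H/N\<close>: the kernel of
  \<open>G \<rightarrow> H \<rightarrow> H/N\<close> is \<open>h\<^sup>-\<^sup>1(N)\<close>.\<close>
lemma FactGroup_iso_preimage:
  assumes h: "group_hom G H h" and onto: "h ` carrier G = carrier H" and N: "N \<lhd> H"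
  shows "G Mod {x \<in> carrier G. h x \<in> N} \<cong> H Mod N"
proof -
  interpret h: group_hom G H h by (rule h)
  interpret N: normal N H by (rule N)
  let ?q = "\<lambda>x. N #>\<^bsub>H\<^esub> h x"
  have "group_hom G (H Mod N) ?q"
    unfolding group_hom_def group_hom_axioms_def
    using group_hom.axioms(1)[OF h] N.factorgroup_is_group
      hom_compose[OF h.homh N.r_coset_hom_Mod] by (simp add: comp_def)
  then interpret q: group_hom G "H Mod N" ?q .
  have "?q ` carrier G = carrier (H Mod N)"
    using onto unfolding carrier_FactGroup by (simp add: image_image[symmetric, of "r_coset H N" h])
  moreover have "kernel G (H Mod N) ?q = {x \<in> carrier G. h x \<in> N}"
    unfolding kernel_def using h.H.coset_join1[OF _ _ N.subgroup_axioms]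
      h.H.coset_join2[OF _ N.subgroup_axioms] by auto
  ultimately show ?thesis using q.FactGroup_iso by metis
qed

section \<open>The complement of a spanning tree\<close>

locale tree_complement =
  fixes \<Delta> \<Upsilon> :: "'a::linorder set set" and i :: int
  assumes complex: "simplicial_complex \<Delta>"
    and sub_skeleton: "\<Upsilon> \<subseteq> skeleton \<Delta> i"
    and same_skeleton: "skeleton \<Upsilon> (i - 1) = skeleton \<Delta> (i - 1)"
    and acyclic_top: "homology_vanishes TYPE(int) \<Upsilon> i"
    and acyclic_below: "homology_vanishes TYPE(int) \<Upsilon> (i - 1)"
begin

abbreviation \<Theta> :: "'a set set" where "\<Theta> \<equiv> faces \<Delta> i - faces \<Upsilon> i"

lemma faces_below: "j \<le> i - 1 \<Longrightarrow> faces \<Upsilon> j = faces \<Delta> j"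
  using faces_skeleton[of j "i - 1" \<Upsilon>] faces_skeleton[of j "i - 1" \<Delta>] same_skeleton by simp

lemma tree_faces_subset: "faces \<Upsilon> j \<subseteq> faces \<Delta> j"
  using sub_skeleton unfolding faces_def skeleton_def by auto

lemma no_faces_above: "faces \<Upsilon> (i + 1) = {}"
  using sub_skeleton unfolding faces_def skeleton_def by force

lemma bd_tree_chain:
  assumes "c \<in> chains \<Upsilon> i"
  shows "bd \<Upsilon> i c = bd \<Delta> i (c :: 'a set \<Rightarrow> int)"
proof
  fix G
  have "(\<Sum>v\<in>{v. v \<notin> G \<and> insert v G \<in> faces \<Upsilon> i}. osign (insert v G) v * c (insert v G))
      = (\<Sum>v\<in>{v. v \<notin> G \<and> insert v G \<in> faces \<Delta> i}. osign (insert v G) v * c (insert v G))"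
    using tree_faces_subset assms unfolding chains_def
    by (intro sum.mono_neutral_left[OF finite_extensions[OF complex]]) auto
  then show "bd \<Upsilon> i c G = bd \<Delta> i c G"
    unfolding bd_def faces_below[of "i - 1", simplified] by simp
qed

lemma cycles_below: "cycles \<Upsilon> (i - 1) = (cycles \<Delta> (i - 1) :: ('a set \<Rightarrow> int) set)"
proof -
  have "faces \<Upsilon> (i - 1) = faces \<Delta> (i - 1)" "faces \<Upsilon> (i - 1 - 1) = faces \<Delta> (i - 1 - 1)"
    by (simp_all add: faces_below)
  then have "bd \<Upsilon> (i - 1) = (bd \<Delta> (i - 1) :: _ \<Rightarrow> _ \<Rightarrow> int)"
    by (intro ext) (simp only: bd_def)
  moreover have "chains \<Upsilon> (i - 1) = (chains \<Delta> (i - 1) :: ('a set \<Rightarrow> int) set)"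
    using faces_below[of "i - 1"] unfolding chains_def by simp
  ultimately show ?thesis unfolding cycles_def by simp
qed

text \<open>Since \<open>\<Upsilon>\<close> has no \<open>(i+1)\<close>-faces and \<open>\<tilde>H\<^sub>i(\<Upsilon>;\<int>) = 0\<close>, it carries no nonzero
  \<open>i\<close>-cycle; hence an \<open>i\<close>-cycle of \<open>\<Delta>\<close> is determined by its values on \<open>\<Theta>\<close>.\<close>
lemma cycle_vanishing_on_complement:
  fixes z :: "'a set \<Rightarrow> int"
  assumes z: "z \<in> cycles \<Delta> i" and zero: "\<forall>t\<in>\<Theta>. z t = 0"
  shows "z = (\<lambda>_. 0)"
proof -
  have "z \<in> chains \<Upsilon> i"
    using z zero unfolding cycles_def chains_def by auto
  moreover from this have "bd \<Upsilon> i z = 0"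
    using bd_tree_chain z unfolding cycles_def by auto
  ultimately have "z \<in> boundaries \<Upsilon> i"
    using acyclic_top unfolding homology_vanishes_def cycles_def by auto
  then obtain c where "z = bd \<Upsilon> (i + 1) c" unfolding boundaries_def by auto
  then show ?thesis unfolding bd_def using no_faces_above by (auto simp: fun_eq_iff)
qed

text \<open>Since \<open>\<tilde>H\<^sub>i\<^sub>-\<^sub>1(\<Upsilon>;\<int>) = 0\<close>, the boundary of every face \<open>t \<in> \<Theta>\<close> bounds a chain of
  \<open>\<Upsilon>\<close>; their difference is a cycle of \<open>\<Delta>\<close> which is the indicator of \<open>t\<close> on \<open>\<Theta>\<close>.\<close>
lemma fundamental_cycle_exists:
  assumes t: "t \<in> \<Theta>"
  shows "\<exists>z. z \<in> cycles \<Delta> i \<and> (\<forall>s\<in>\<Theta>. z s = (unit_chain t s :: int))"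
proof -
  have "bd \<Delta> i (unit_chain t) \<in> (cycles \<Upsilon> (i - 1) :: ('a set \<Rightarrow> int) set)"
    using boundary_cycle[OF complex, of "i - 1" "unit_chain t"] cycles_below by simp
  then obtain g :: "'a set \<Rightarrow> int" where g: "g \<in> chains \<Upsilon> i" "bd \<Upsilon> i g = bd \<Delta> i (unit_chain t)"
    using acyclic_below unfolding homology_vanishes_def boundaries_def by auto
  let ?z = "\<lambda>F. unit_chain t F - g F"
  have "?z \<in> chains \<Delta> i"
    using g(1) t tree_faces_subset unfolding chains_def unit_chain_def by auto
  moreover have "bd \<Delta> i ?z = 0"
    unfolding bd_diff using g bd_tree_chain by (simp add: fun_eq_iff)
  moreover have "\<forall>s\<in>\<Theta>. ?z s = unit_chain t s"
    using g(1) unfolding chains_def by simp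
  ultimately show ?thesis unfolding cycles_def by blast
qed

definition fundamental_cycle :: "'a set \<Rightarrow> 'a set \<Rightarrow> int" where
  "fundamental_cycle t = (SOME z. z \<in> cycles \<Delta> i \<and> (\<forall>s\<in>\<Theta>. z s = unit_chain t s))"

lemma fundamental_cycle:
  assumes "t \<in> \<Theta>"
  shows "fundamental_cycle t \<in> cycles \<Delta> i" and "s \<in> \<Theta> \<Longrightarrow> fundamental_cycle t s = unit_chain t s"
  using someI_ex[OF fundamental_cycle_exists[OF assms]] unfolding fundamental_cycle_def by blast+

definition lift :: "('a set \<Rightarrow> int) \<Rightarrow> ('a set \<Rightarrow> int)" where
  "lift y = (\<lambda>F. \<Sum>t\<in>\<Theta>. y t * fundamental_cycle t F)"

lemma lift_cycle: "lift y \<in> cycles \<Delta> i"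
proof -
  have "lift y \<in> chains \<Delta> i"
    using fundamental_cycle(1) unfolding lift_def chains_def cycles_def by auto
  moreover have "bd \<Delta> i (lift y) = 0"
    unfolding lift_def bd_sum using fundamental_cycle(1) unfolding cycles_def
    by (simp add: fun_eq_iff)
  ultimately show ?thesis unfolding cycles_def by simp
qed

lemma lift_on_complement:
  assumes "s \<in> \<Theta>"
  shows "lift y s = y s"
proof -
  have "lift y s = (\<Sum>t\<in>\<Theta>. if t = s then y t else 0)"
    unfolding lift_def using assms by (intro sum.cong) (auto simp: fundamental_cycle(2) unit_chain_def)
  also have "\<dots> = y s" using assms finite_faces[OF complex, of i] by simp
  finally show ?thesis .
qed

lemma cycle_expansion:
  assumes "z \<in> cycles \<Delta> i"
  shows "z = lift z"
  using cycle_vanishing_on_complement[OF cycles_diff[OF assms lift_cycle]]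
  by (auto simp: fun_eq_iff lift_on_complement)

text \<open>By the expansion of cycles, every \<open>i\<close>-cycle pairs with \<open>x\<close> and with
  its transfer in the same way.\<close>
definition transfer :: "('a set \<Rightarrow> int) \<Rightarrow> ('a set \<Rightarrow> int)" where
  "transfer x = (\<lambda>F. if F \<in> \<Theta> then (\<Sum>G\<in>faces \<Delta> i. fundamental_cycle F G * x G) else 0)"

lemma transfer_carrier: "transfer x \<in> carrier (chain_group \<Theta>)"
  by (simp add: transfer_def chain_group_carrier)

lemma pairing_transfer:
  assumes z: "z \<in> cycles \<Delta> i"
  shows "(\<Sum>G\<in>faces \<Delta> i. z G * x G) = (\<Sum>G\<in>faces \<Delta> i. z G * transfer x G)"
proof -
  have "(\<Sum>G\<in>faces \<Delta> i. z G * x G) = (\<Sum>G\<in>faces \<Delta> i. \<Sum>t\<in>\<Theta>. z t * (fundamental_cycle t G * x G))"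
    by (subst cycle_expansion[OF z]) (simp add: lift_def sum_distrib_right mult.assoc)
  also have "\<dots> = (\<Sum>t\<in>\<Theta>. z t * transfer x t)"
    by (subst sum.swap) (auto simp: transfer_def sum_distrib_left intro: sum.cong)
  also have "\<dots> = (\<Sum>G\<in>faces \<Delta> i. z G * transfer x G)"
    by (rule sum.mono_neutral_left[OF finite_faces[OF complex]]) (auto simp: transfer_def)
  finally show ?thesis .
qed

text \<open>The coboundary of \<open>x\<close> at an \<open>(i+1)\<close>-face \<open>F\<close> is the pairing of \<open>x\<close> with the cycle
  \<open>\<partial>F\<close>, so the Laplacian cannot distinguish \<open>x\<close> from its transfer.\<close>
lemma laplacian_transfer: "laplacian \<Delta> i x = laplacian \<Delta> i (transfer x)"
proof -
  have "cobd \<Delta> (i + 1) x F = cobd \<Delta> (i + 1) (transfer x) F" for F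
  proof (cases "F \<in> faces \<Delta> (i + 1)")
    case True
    have "bd \<Delta> (i + 1) (unit_chain F) \<in> (cycles \<Delta> i :: ('a set \<Rightarrow> int) set)"
      by (rule boundary_cycle[OF complex])
    then show ?thesis
      using cobd_as_transpose[OF complex True, of x] cobd_as_transpose[OF complex True, of "transfer x"]
        pairing_transfer[of _ x] by simp
  qed (simp add: cobd_def)
  then show ?thesis unfolding laplacian_def by presburger
qed

text \<open>Restriction to \<open>\<Theta>\<close> maps the cycles onto \<open>\<int>\<^sup>\<Theta>\<close>, with \<open>lift\<close> as a section.\<close>
lemma restrict_onto: "restrict_chain \<Theta> ` cycles \<Delta> i = carrier (chain_group \<Theta>)"
proof
  show "restrict_chain \<Theta> ` cycles \<Delta> i \<subseteq> carrier (chain_group \<Theta>)"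
    by (auto simp: restrict_chain_def chain_group_carrier)
  show "carrier (chain_group \<Theta>) \<subseteq> restrict_chain \<Theta> ` cycles \<Delta> i"
  proof
    fix y assume "y \<in> carrier (chain_group \<Theta>)"
    then have "y = restrict_chain \<Theta> (lift y)"
      by (auto simp: restrict_chain_def chain_group_carrier lift_on_complement fun_eq_iff)
    then show "y \<in> restrict_chain \<Theta> ` cycles \<Delta> i" using lift_cycle by blast
  qed
qed

lemma laplacian_image_preimage:
  "{z \<in> cycles \<Delta> i. restrict_chain \<Theta> z \<in> reduced_laplacian \<Delta> i \<Theta> ` carrier (chain_group \<Theta>)}
     = laplacian \<Delta> i ` chains \<Delta> i"
proof (intro equalityI subsetI)
  fix z assume "z \<in> {z \<in> cycles \<Delta> i. restrict_chain \<Theta> z \<in> reduced_laplacian \<Delta> i \<Theta> ` carrier (chain_group \<Theta>)}"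
  then obtain y where z: "z \<in> cycles \<Delta> i" and y: "y \<in> carrier (chain_group \<Theta>)"
    and eq: "restrict_chain \<Theta> z = restrict_chain \<Theta> (laplacian \<Delta> i y)"
    by (auto simp: reduced_laplacian_restrict)
  have "\<forall>t\<in>\<Theta>. z t - laplacian \<Delta> i y t = 0"
  proof
    fix t assume "t \<in> \<Theta>"
    then show "z t - laplacian \<Delta> i y t = 0" using fun_cong[OF eq, of t] by (simp add: restrict_chain_def)
  qed
  then have "z = laplacian \<Delta> i y"
    using cycle_vanishing_on_complement[OF cycles_diff[OF z laplacian_cycle[OF complex]]]
    by (simp add: fun_eq_iff)
  moreover have "y \<in> chains \<Delta> i" using y by (auto simp: chain_group_carrier chains_def)
  ultimately show "z \<in> laplacian \<Delta> i ` chains \<Delta> i" by blast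
next
  fix z :: "'a set \<Rightarrow> int" assume "z \<in> laplacian \<Delta> i ` chains \<Delta> i"
  then obtain x where x: "z = laplacian \<Delta> i x" by auto
  then have "restrict_chain \<Theta> z = reduced_laplacian \<Delta> i \<Theta> (transfer x)"
    by (simp add: reduced_laplacian_restrict laplacian_transfer[of x])
  then show "z \<in> {z \<in> cycles \<Delta> i. restrict_chain \<Theta> z \<in> reduced_laplacian \<Delta> i \<Theta> ` carrier (chain_group \<Theta>)}"
    using x laplacian_cycle[OF complex] transfer_carrier by auto
qed

end

lemma tree_complement_of_spanning_tree:
  assumes "simplicial_complex \<Delta>" and "spanning_tree (skeleton \<Delta> i) i \<Upsilon>"
    and "homology_vanishes TYPE(int) \<Upsilon> (i - 1)"
  shows "tree_complement \<Delta> \<Upsilon> i"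
proof
  have "\<Upsilon> \<subseteq> skeleton \<Delta> i" and "skeleton \<Upsilon> (i - 1) = skeleton (skeleton \<Delta> i) (i - 1)"
    and "homology_vanishes TYPE(int) \<Upsilon> i"
    using assms(2) unfolding spanning_tree_def by auto
  then show "\<Upsilon> \<subseteq> skeleton \<Delta> i" and "skeleton \<Upsilon> (i - 1) = skeleton \<Delta> (i - 1)"
    and "homology_vanishes TYPE(int) \<Upsilon> i"
    by (simp_all add: skeleton_skeleton)
qed (use assms in auto)

text \<open>Restriction to \<open>\<Theta>\<close> maps the cycles onto
  \<open>\<int>\<^sup>\<Theta>\<close>, and the preimage of \<open>im L\<^sup>~\<close> is exactly \<open>im L\<^sub>\<Delta>\<^sub>,\<^sub>i\<close>.\<close>
theorem mainTheorem1:
  fixes \<Delta> \<Upsilon> :: "'a::linorder set set" and d i :: int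
  assumes "APC \<Delta> d"
    and "0 \<le> i" and "i < d"
    and "spanning_tree (skeleton \<Delta> i) i \<Upsilon>"
    and "homology_vanishes TYPE(int) \<Upsilon> (i - 1)"
  shows "critical_group \<Delta> i \<cong>
           (chain_group (faces \<Delta> i - faces \<Upsilon> i)
              Mod (reduced_laplacian \<Delta> i (faces \<Delta> i - faces \<Upsilon> i)
                     ` carrier (chain_group (faces \<Delta> i - faces \<Upsilon> i))))"
proof -
  have "simplicial_complex \<Delta>" using assms(1) unfolding APC_def pure_dim_def by simp
  then interpret tree_complement \<Delta> \<Upsilon> i
    using tree_complement_of_spanning_tree assms(4,5) by blast
  have "reduced_laplacian \<Delta> i \<Theta> ` carrier (chain_group \<Theta>) \<lhd> chain_group \<Theta>"
    by (rule comm_group.subgroup_imp_normal[OF chain_group_comm_group reduced_laplacian_subgroup])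
  from FactGroup_iso_preimage[OF restrict_chain_hom _ this] show ?thesis
    using restrict_onto unfolding critical_group_def laplacian_image_preimage[symmetric] by simp
qed

end
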